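(* Let $f_1^0, f_2^0, g_2^0, x^0\in\mathbb{R}$ with $\Delta := f_1^0-f_2^0>0$ and let $N\ge1$ be an integer. Let $\mu_1,L_1,\mu_2,L_2$ satisfy $0\le\mu_1<L_2\le L_1<\infty$, $\mu_2<L_2$, $\mu_2<L_1$, and either $\mu_2\ge0$, or $\mu_1>-\mu_2>0$ and $E:=\frac{L_2+\mu_2}{L_1L_2}\cdot\frac{L_2-L_1}{-\mu_2}+\mu_1^{-1}-L_1^{-1}\le0$. Let $p_1 := L_2^{-1}\frac{L_2-\mu_1}{L_1-\mu_1}+L_2^{-1}\big(1+\frac{L_2^{-1}-L_1^{-1}}{\mu_1^{-1}-L_1^{-1}}\big)$ (with $1/0$ interpreted as $\infty$ when $\mu_1=0$) and $U := -\sqrt{\frac{2\Delta}{p_1N}}$. Define, for $k=0,\dots,N$: $x^k = x^0-k\frac{U}{L_2}$, $g_1^k = g_2^0-(k-1)U$, $f_1^k = f_2(x^k)+\frac{N-k}{N}\Delta$, and for $k=0,\dots,N-1$: $\bar x^k = x^k-\frac{L_2-\mu_1}{L_1-\mu_1}\frac{U}{L_2}$. Define $f_2,f_1:\mathbb{R}\to\mathbb{R}$ by $f_2(x)=\frac12L_2(x-x^0)^2+g_2^0(x-x^0)+f_2^0$ and $f_1(x)=\frac12L_1(x-x^0)^2+g_1^0(x-x^0)+f_1^0$ for $x\le x^0$; $f_1(x)=\frac12L_1(x-x^k)^2+g_1^k(x-x^k)+f_1^k$ for $x\in[x^k,\bar x^k]$; $f_1(x)=\frac12\mu_1(x-x^{k+1})^2+g_1^{k+1}(x-x^{k+1})+f_1^{k+1}$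 for $x\in[\bar x^k,x^{k+1}]$ ($k=0,\dots,N-1$); $f_1(x)=\frac12L_1(x-x^N)^2+g_1^N(x-x^N)+f_1^N$ for $x\ge x^N$. Then $f_1\in\mathcal{F}_{\mu_1,L_1}$, $f_2\in\mathcal{F}_{\mu_2,L_2}$, and performing $N$ iterations of DCA ($x^{k+1}$ such that $\nabla f_1(x^{k+1})=\nabla f_2(x^k)$) on $F=f_1-f_2$ starting from $x^0$ produces the points $x^0,\dots,x^N$ and $$\tfrac12\min_{0\le k\le N}|\nabla f_1(x^k)-\nabla f_2(x^k)|^2=\frac{\Delta}{p_1N}.$$
   Context: For $\mu\in\mathbb{R}$ and $L\in(\mu,\infty]$, $\mathcal{F}_{\mu,L}$ is the class of proper lower semicontinuous functions $f$ with $f-\frac{\mu}{2}|\cdot|^2$ convex and $\frac{L}{2}|\cdot|^2-f$ convex (when $L<\infty$). A DCA iteration from $x$ on $F=f_1-f_2$ selects $g_2\in\partial f_2(x)$ and $x^+\in\operatorname{argmin}_w\{f_1(w)-g_2w\}$. *)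

theory Defs
  imports "HOL-Analysis.Analysis"
begin

definition lsc_real :: "(real \<Rightarrow> real) \<Rightarrow> bool" where
  "lsc_real f \<longleftrightarrow> (\<forall>a. closed {y. f y \<le> a})"

(* The class F_{mu,L} for finite L, for real-valued (hence proper) functions on R. *)
definition FmuL :: "real \<Rightarrow> real \<Rightarrow> (real \<Rightarrow> real) \<Rightarrow> bool" where
  "FmuL \<mu> L f \<longleftrightarrow> lsc_real f
     \<and> convex_on UNIV (\<lambda>x. f x - \<mu> / 2 * x\<^sup>2)
     \<and> convex_on UNIV (\<lambda>x. L / 2 * x\<^sup>2 - f x)"

(* One DCA iteration from x on F = f1 - f2 may produce x':
   select g2 in the (here: differentiable) subdifferential of f2 at x, i.e. the gradient,
   and x' is a minimiser of w \<mapsto> f1 w - g2 * w. *)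
definition dca_step :: "(real \<Rightarrow> real) \<Rightarrow> (real \<Rightarrow> real) \<Rightarrow> real \<Rightarrow> real \<Rightarrow> bool" where
  "dca_step f1 f2 x x' \<longleftrightarrow>
     (\<exists>g2. (f2 has_real_derivative g2) (at x) \<and> (\<forall>w. f1 x' - g2 * x' \<le> f1 w - g2 * w))"

(* p_1, with 1/0 read as +infinity when mu1 = 0 (then the fraction term vanishes). *)
definition p1_const :: "real \<Rightarrow> real \<Rightarrow> real \<Rightarrow> real" where
  "p1_const \<mu>1 L1 L2 =
     (if \<mu>1 = 0 then inverse L2 * ((L2 - \<mu>1) / (L1 - \<mu>1)) + inverse L2
      else inverse L2 * ((L2 - \<mu>1) / (L1 - \<mu>1))
           + inverse L2 * (1 + (inverse L2 - inverse L1) / (inverse \<mu>1 - inverse L1)))"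

end

theory Submission
  imports Defs
begin

(* f1 is C^1 and its derivative is piecewise affine, with slope L1 on [x^k, xbar^k] and slope mu1
   on [xbar^k, x^(k+1)]; these slope bounds put f1 in F(mu1, L1). At the nodes f1'(x^k) = g1^k and
   f2'(x^k) = g1^(k+1) = f1'(x^(k+1)), so by convexity x^(k+1) minimises f1(w) - f2'(x^k) w: DCA
   walks along the grid, and the gradient gap at every node is g1^k - g1^(k+1) = U. The breakpoint
   xbar^k is where the two parabolas glued there have equal slopes; that they also have equal
   values is exactly the equation p1 N U^2 = 2 Delta defining U. *)

definition parabola :: "real \<Rightarrow> real \<Rightarrow> real \<Rightarrow> real \<Rightarrow> real \<Rightarrow> real" where
  "parabola a c g v = (\<lambda>y. 1/2 * a * (y - c)\<^sup>2 + g * (y - c) + v)"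

lemma has_real_derivative_parabola:
  "(parabola a c g v has_real_derivative a * (y - c) + g) (at y)"
  unfolding parabola_def
  by (auto intro!: derivative_eq_intros simp: power2_eq_square algebra_simps)

lemma FmuL_if_derivative_slopes:
  fixes f f' :: "real \<Rightarrow> real"
  assumes f': "\<And>y. (f has_real_derivative f' y) (at y)"
    and lower: "mono (\<lambda>y. f' y - \<mu> * y)" and upper: "mono (\<lambda>y. L * y - f' y)"
  shows "FmuL \<mu> L f"
  unfolding FmuL_def
proof (intro conjI)
  have "continuous_on UNIV f"
    using f' DERIV_isCont by (blast intro: continuous_at_imp_continuous_on)
  then show "lsc_real f"
    unfolding lsc_real_def by (auto intro!: closed_Collect_le continuous_on_const)
  show "convex_on UNIV (\<lambda>y. f y - \<mu> / 2 * y\<^sup>2)"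
    by (rule convex_on_realI[where f'="\<lambda>y. f' y - \<mu> * y"])
      (use f' lower in \<open>auto intro!: derivative_eq_intros simp: mono_def\<close>)
  show "convex_on UNIV (\<lambda>y. L / 2 * y\<^sup>2 - f y)"
    by (rule convex_on_realI[where f'="\<lambda>y. L * y - f' y"])
      (use f' upper in \<open>auto intro!: derivative_eq_intros simp: mono_def\<close>)
qed

lemma mono_affine: "0 \<le> a \<Longrightarrow> mono (\<lambda>y::real. a * y + b)"
  by (auto simp: mono_def mult_left_mono)

lemma FmuL_parabola:
  assumes "\<mu> \<le> a" "a \<le> L"
  shows "FmuL \<mu> L (parabola a c g v)"
proof (rule FmuL_if_derivative_slopes[OF has_real_derivative_parabola])
  show "mono (\<lambda>y. a * (y - c) + g - \<mu> * y)"
    using mono_affine[of "a - \<mu>" "g - a * c"] assms by (simp add: algebra_simps)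
  show "mono (\<lambda>y. L * y - (a * (y - c) + g))"
    using mono_affine[of "L - a" "a * c - g"] assms by (simp add: algebra_simps)
qed

lemma dca_step_if_convex:
  assumes "convex_on UNIV f1"
    and "(f1 has_real_derivative g) (at x')" and "(f2 has_real_derivative g) (at x)"
  shows "dca_step f1 f2 x x'"
proof -
  have "convex_on UNIV (\<lambda>w. f1 w - g * w)"
    using assms(1) by (auto simp: convex_on_def algebra_simps)
  moreover have "((\<lambda>w. f1 w - g * w) has_real_derivative 0) (at x')"
    using assms(2) by (auto intro!: derivative_eq_intros)
  ultimately have "f1 x' - g * x' \<le> f1 w - g * w" for w
    using convex_on_imp_above_tangent[of UNIV, OF _ connected_UNIV] by fastforce
  then show ?thesis
    unfolding dca_step_def using assms(3) by blast
qed

definition piecewise ::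
    "(nat \<Rightarrow> real) \<Rightarrow> nat \<Rightarrow> (real \<Rightarrow> real) \<Rightarrow> (nat \<Rightarrow> real \<Rightarrow> real) \<Rightarrow> (real \<Rightarrow> real)
      \<Rightarrow> (real \<Rightarrow> real) \<Rightarrow> bool" where
  "piecewise t M L P R G \<longleftrightarrow>
     (\<forall>y \<le> t 0. G y = L y) \<and> (\<forall>j<M. \<forall>y \<in> {t j..t (Suc j)}. G y = P j y) \<and> (\<forall>y \<ge> t M. G y = R y)"

lemma piecewise_compose:
  assumes "piecewise t M L P R G"
  shows "piecewise t M (\<lambda>y. H y (L y)) (\<lambda>j y. H y (P j y)) (\<lambda>y. H y (R y)) (\<lambda>y. H y (G y))"
  using assms unfolding piecewise_def by simp

lemma mono_on_atMost_glue:
  fixes G :: "real \<Rightarrow> real"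
  assumes left: "mono_on {..m} G" and right: "mono_on {m..b} G"
  shows "mono_on {..b} G"
proof (rule mono_onI)
  fix u v assume uv: "u \<in> {..b}" "v \<in> {..b}" "u \<le> v"
  consider "v \<le> m" | "m \<le> u" | "u < m" "m < v" by linarith
  then show "G u \<le> G v"
  proof cases
    case 1
    then show ?thesis using mono_onD[OF left] uv by simp
  next
    case 2
    then show ?thesis using mono_onD[OF right] uv by simp
  next
    case 3
    then have "G u \<le> G m" "G m \<le> G v"
      using mono_onD[OF left] mono_onD[OF right] uv by simp_all
    then show ?thesis by linarith
  qed
qed

lemma mono_glue:
  fixes G :: "real \<Rightarrow> real"
  assumes left: "mono_on {..m} G" and right: "mono_on {m..} G"
  shows "mono G"
proof (rule monoI)
  fix u v :: real assume "u \<le> v"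
  have "mono_on {m..max m v} G"
    using right by (rule mono_on_subset) auto
  with left have "mono_on {..max m v} G"
    by (rule mono_on_atMost_glue)
  then show "G u \<le> G v"
    using \<open>u \<le> v\<close> by (simp add: mono_onD)
qed

lemma mono_on_if_eq_mono:
  fixes G Q :: "real \<Rightarrow> real"
  assumes "\<forall>y\<in>S. G y = Q y" "mono Q"
  shows "mono_on S G"
  by (rule mono_onI) (use assms in \<open>auto dest: monoD\<close>)

lemma mono_if_piecewise:
  assumes G: "piecewise t M L P R G"
    and mono_pieces: "mono L" "\<And>j. j < M \<Longrightarrow> mono (P j)" "mono R"
  shows "mono G"
proof -
  have "mono_on {..t n} G" if "n \<le> M" for n
    using that
  proof (induction n)
    case 0
    have "\<forall>y\<in>{..t 0}. G y = L y"
      using G by (simp add: piecewise_def)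
    then show ?case
      using mono_pieces(1) by (rule mono_on_if_eq_mono)
  next
    case (Suc n)
    have "mono_on {..t n} G"
      using Suc by simp
    moreover have "\<forall>y\<in>{t n..t (Suc n)}. G y = P n y"
      using G Suc.prems by (simp add: piecewise_def)
    then have "mono_on {t n..t (Suc n)} G"
      by (rule mono_on_if_eq_mono) (use mono_pieces(2) Suc.prems in simp)
    ultimately show ?case
      by (rule mono_on_atMost_glue)
  qed
  then have "mono_on {..t M} G"
    by simp
  moreover have "\<forall>y\<in>{t M..}. G y = R y"
    using G by (simp add: piecewise_def)
  then have "mono_on {t M..} G"
    using mono_pieces(3) by (rule mono_on_if_eq_mono)
  ultimately show ?thesis
    by (rule mono_glue)
qed

lemma interval_containing_left:
  fixes t :: "nat \<Rightarrow> real"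
  assumes "t 0 < y" "y \<le> t M"
  shows "\<exists>j<M. t j < y \<and> y \<le> t (Suc j)"
  using assms(2)
proof (induction M)
  case 0
  then show ?case using assms(1) by linarith
next
  case (Suc M)
  show ?case
  proof (cases "y \<le> t M")
    case True
    then obtain j where "j < M" "t j < y \<and> y \<le> t (Suc j)"
      using Suc.IH by blast
    then show ?thesis using less_SucI by blast
  next
    case False
    then show ?thesis using Suc.prems by (intro exI[of _ M]) simp
  qed
qed

lemma interval_containing_right:
  fixes t :: "nat \<Rightarrow> real"
  assumes "t 0 \<le> y" "y < t M"
  shows "\<exists>j<M. t j \<le> y \<and> y < t (Suc j)"
  using assms(2)
proof (induction M)
  case 0
  then show ?case using assms(1) by linarith
next
  case (Suc M)
  show ?case
  proof (cases "y < t M")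
    case True
    then obtain j where "j < M" "t j \<le> y \<and> y < t (Suc j)"
      using Suc.IH by blast
    then show ?thesis using less_SucI by blast
  next
    case False
    then show ?thesis using Suc.prems by (intro exI[of _ M]) simp
  qed
qed

lemma has_real_derivative_at_left_if_eq:
  assumes "c < y" "\<forall>z\<in>{c..y}. G z = Q z" "(Q has_real_derivative q) (at y)"
  shows "(G has_real_derivative q) (at_left y)"
proof -
  have "(G has_real_derivative q) (at y within {c..y})"
    by (rule has_field_derivative_transform_within[OF has_field_derivative_at_within[OF assms(3)],
          where d=1]) (use assms(1,2) in auto)
  then show ?thesis
    using assms(1) by (simp add: at_within_Icc_at_left)
qed

lemma has_real_derivative_at_right_if_eq:
  assumes "y < d" "\<forall>z\<in>{y..d}. G z = Q z" "(Q has_real_derivative q) (at y)"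
  shows "(G has_real_derivative q) (at_right y)"
proof -
  have "(G has_real_derivative q) (at y within {y..d})"
    by (rule has_field_derivative_transform_within[OF has_field_derivative_at_within[OF assms(3)],
          where d=1]) (use assms(1,2) in auto)
  then show ?thesis
    using assms(1) by (simp add: at_within_Icc_at_right)
qed

lemma has_real_derivative_split:
  assumes "(G has_real_derivative q) (at_left y)" "(G has_real_derivative q) (at_right y)"
  shows "(G has_real_derivative q) (at y)"
  using assms unfolding has_field_derivative_iff by (rule filterlim_split_at)

lemma has_real_derivative_if_piecewise:
  assumes G: "piecewise t M L P R G" and D: "piecewise t M L' P' R' D"
    and L': "\<And>y. (L has_real_derivative L' y) (at y)"
    and P': "\<And>j y. j < M \<Longrightarrow> (P j has_real_derivative P' j y) (at y)"
    and R': "\<And>y. (R has_real_derivative R' y) (at y)"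
  shows "(G has_real_derivative D y) (at y)"
proof (rule has_real_derivative_split)
  have left: "\<forall>z \<le> t 0. G z = L z \<and> D z = L' z"
    and middle: "\<forall>j<M. \<forall>z\<in>{t j..t (Suc j)}. G z = P j z \<and> D z = P' j z"
    and right: "\<forall>z \<ge> t M. G z = R z \<and> D z = R' z"
    using G D by (simp_all add: piecewise_def)
  consider "y \<le> t 0" | "t M < y" | j where "j < M" "t j < y" "y \<le> t (Suc j)"
    using interval_containing_left[of t y M] by force
  then show "(G has_real_derivative D y) (at_left y)"
  proof cases
    case 1
    then show ?thesis
      using left L'[of y] by (intro has_real_derivative_at_left_if_eq[of "y - 1" y G L]) auto
  next
    case 2
    then show ?thesis
      using right R'[of y] by (intro has_real_derivative_at_left_if_eq[of "t M" y G R]) auto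
  next
    case 3
    then show ?thesis
      using middle P'[of j y] by (intro has_real_derivative_at_left_if_eq[of "t j" y G "P j"]) auto
  qed
  consider "y < t 0" | "t M \<le> y" | j where "j < M" "t j \<le> y" "y < t (Suc j)"
    using interval_containing_right[of t y M] by force
  then show "(G has_real_derivative D y) (at_right y)"
  proof cases
    case 1
    then show ?thesis
      using left L'[of y] by (intro has_real_derivative_at_right_if_eq[of y "t 0" G L]) auto
  next
    case 2
    then show ?thesis
      using right R'[of y] by (intro has_real_derivative_at_right_if_eq[of y "y + 1" G R]) auto
  next
    case 3
    then show ?thesis
      using middle P'[of j y]
      by (intro has_real_derivative_at_right_if_eq[of y "t (Suc j)" G "P j"]) auto
  qed
qed

(* The shape of f1 in the statement: on the grid x^k = x0 + k h with x^k <= xbar^k = x^k + r h,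
   the piece A k lives on [x^k, xbar^k], the piece B (k + 1) on [xbar^k, x^(k+1)], and A 0, A N
   continue to the left of x0 and to the right of x^N. *)
definition grid_glue ::
    "real \<Rightarrow> real \<Rightarrow> real \<Rightarrow> nat \<Rightarrow> (nat \<Rightarrow> real \<Rightarrow> real) \<Rightarrow> (nat \<Rightarrow> real \<Rightarrow> real) \<Rightarrow> real \<Rightarrow> real" where
  "grid_glue x0 h r N A B y =
     (if y \<le> x0 then A 0 y
      else if x0 + real N * h \<le> y then A N y
      else let k = nat \<lfloor>(y - x0) / h\<rfloor> in
           if y \<le> x0 + real k * h + r * h then A k y else B (Suc k) y)"

definition grid_point :: "real \<Rightarrow> real \<Rightarrow> real \<Rightarrow> nat \<Rightarrow> real" where
  "grid_point x0 h r j = x0 + real (j div 2) * h + (if odd j then r * h else 0)"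

lemma grid_glue_cell:
  assumes h: "0 < h" and r: "0 \<le> r" and k: "k < N"
    and y: "x0 + real k * h \<le> y" "y < x0 + real (Suc k) * h"
  shows "grid_glue x0 h r N A B y = (if y \<le> x0 + real k * h + r * h then A k y else B (Suc k) y)"
proof (cases "y \<le> x0")
  case True
  with y(1) have "real k * h \<le> 0"
    by linarith
  with h have "k = 0"
    by (simp add: mult_le_0_iff)
  with True y(1) have "y = x0"
    by simp
  with \<open>k = 0\<close> show ?thesis
    using r h by (simp add: grid_glue_def)
next
  case False
  have "real (Suc k) * h \<le> real N * h"
    using k h by (intro mult_right_mono) auto
  then have "\<not> x0 + real N * h \<le> y"
    using y by linarith
  moreover have "nat \<lfloor>(y - x0) / h\<rfloor> = k"
  proof -
    have "real k \<le> (y - x0) / h" "(y - x0) / h < real k + 1"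
      using y h by (simp_all add: field_simps)
    then show ?thesis
      by linarith
  qed
  ultimately show ?thesis
    using False by (simp add: grid_glue_def)
qed

lemma grid_glue_node:
  assumes h: "0 < h" and r: "0 \<le> r" and k: "k \<le> N"
  shows "grid_glue x0 h r N A B (x0 + real k * h) = A k (x0 + real k * h)"
proof (cases "k = N")
  case True
  have "0 < real N * h" if "N \<noteq> 0"
    using that h by simp
  with True show ?thesis
    by (cases "N = 0") (simp_all add: grid_glue_def)
next
  case False
  then show ?thesis
    using grid_glue_cell[of h r k N x0 "x0 + real k * h"] h r k by (simp add: algebra_simps)
qed

lemma grid_glue_on_rising_part:
  assumes h: "0 < h" and r: "0 \<le> r" "r \<le> 1" and k: "k < N"
    and match_node: "A (Suc k) (x0 + real (Suc k) * h) = B (Suc k) (x0 + real (Suc k) * h)"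
    and match_mid: "A k (x0 + real k * h + r * h) = B (Suc k) (x0 + real k * h + r * h)"
    and y: "x0 + real k * h \<le> y" "y \<le> x0 + real k * h + r * h"
  shows "grid_glue x0 h r N A B y = A k y"
proof (cases "y < x0 + real (Suc k) * h")
  case True
  then show ?thesis
    using grid_glue_cell[OF h r(1) k y(1) True] y(2) by simp
next
  case False
  have "r * h \<le> h"
    using mult_right_mono[of r 1 h] r h by simp
  with False y(2) have node: "y = x0 + real (Suc k) * h" and mid: "y = x0 + real k * h + r * h"
    by (simp_all add: algebra_simps)
  have "grid_glue x0 h r N A B y = B (Suc k) y"
    using grid_glue_node[OF h r(1), of "Suc k" N x0 A B] k match_node unfolding node by simp
  also have "\<dots> = A k y"
    using match_mid unfolding mid by simp
  finally show ?thesis .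
qed

lemma grid_glue_on_flat_part:
  assumes h: "0 < h" and r: "0 \<le> r" and k: "k < N"
    and match_node: "A (Suc k) (x0 + real (Suc k) * h) = B (Suc k) (x0 + real (Suc k) * h)"
    and match_mid: "A k (x0 + real k * h + r * h) = B (Suc k) (x0 + real k * h + r * h)"
    and y: "x0 + real k * h + r * h \<le> y" "y \<le> x0 + real (Suc k) * h"
  shows "grid_glue x0 h r N A B y = B (Suc k) y"
proof (cases "y < x0 + real (Suc k) * h")
  case True
  have "x0 + real k * h \<le> y"
    using y(1) r h by (smt (verit) mult_nonneg_nonneg)
  then have "grid_glue x0 h r N A B y = (if y \<le> x0 + real k * h + r * h then A k y else B (Suc k) y)"
    by (rule grid_glue_cell[OF h r k _ True])
  then show ?thesis
    using y(1) match_mid by auto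
next
  case False
  then have "y = x0 + real (Suc k) * h"
    using y(2) by simp
  then show ?thesis
    using grid_glue_node[OF h r, of "Suc k" N x0 A B] k match_node by simp
qed

lemma piecewise_grid_glue:
  assumes h: "0 < h" and r: "0 \<le> r" "r \<le> 1"
    and match_node: "\<And>k. A k (x0 + real k * h) = B k (x0 + real k * h)"
    and match_mid: "\<And>k. A k (x0 + real k * h + r * h) = B (Suc k) (x0 + real k * h + r * h)"
  shows "piecewise (grid_point x0 h r) (2 * N) (A 0)
    (\<lambda>j. if even j then A (j div 2) else B (Suc (j div 2))) (A N) (grid_glue x0 h r N A B)"
  unfolding piecewise_def
proof (intro conjI allI impI ballI)
  fix y assume "y \<le> grid_point x0 h r 0"
  then show "grid_glue x0 h r N A B y = A 0 y"
    by (simp add: grid_point_def grid_glue_def)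
next
  fix y assume y: "grid_point x0 h r (2 * N) \<le> y"
  show "grid_glue x0 h r N A B y = A N y"
  proof (cases "y \<le> x0")
    case True
    with y have "real N * h \<le> 0"
      by (simp add: grid_point_def)
    with h have "N = 0"
      by (simp add: mult_le_0_iff)
    then show ?thesis
      by (simp add: grid_glue_def)
  next
    case False
    then show ?thesis
      using y by (simp add: grid_point_def grid_glue_def)
  qed
next
  fix j y assume j: "j < 2 * N" and y: "y \<in> {grid_point x0 h r j..grid_point x0 h r (Suc j)}"
  define k where "k = j div 2"
  have k: "k < N"
    using j unfolding k_def by linarith
  have "j = 2 * k \<or> j = Suc (2 * k)"
    unfolding k_def by presburger
  then show "grid_glue x0 h r N A B y = (if even j then A (j div 2) else B (Suc (j div 2))) y"
  proof
    assume "j = 2 * k"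
    then show ?thesis
      using grid_glue_on_rising_part[where A=A and B=B, OF h r k match_node[of "Suc k"] match_mid[of k]] y by (simp add: grid_point_def)
  next
    assume "j = Suc (2 * k)"
    then show ?thesis
      using grid_glue_on_flat_part[where A=A and B=B, OF h r(1) k match_node[of "Suc k"] match_mid[of k]] y
      by (simp add: grid_point_def algebra_simps)
  qed
qed

lemma p1_const_closed_form:
  assumes "0 \<le> \<mu>1" "\<mu>1 < L2" "L2 \<le> L1"
  shows "p1_const \<mu>1 L1 L2 * L2\<^sup>2 = L2 + \<mu>1 + (L2 - \<mu>1)\<^sup>2 / (L1 - \<mu>1)"
proof -
  have ne: "L2 \<noteq> 0" "L1 \<noteq> 0" "L1 - \<mu>1 \<noteq> 0"
    using assms by auto
  have "p1_const \<mu>1 L1 L2 * L2\<^sup>2 = L2 * (L2 - \<mu>1) / (L1 - \<mu>1) + L2 + \<mu>1 * (L1 - L2) / (L1 - \<mu>1)"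
  proof (cases "\<mu>1 = 0")
    case True
    then show ?thesis
      using ne by (simp add: p1_const_def divide_simps power2_eq_square algebra_simps)
  next
    case False
    then have "(inverse L2 - inverse L1) / (inverse \<mu>1 - inverse L1) = \<mu>1 * (L1 - L2) / (L2 * (L1 - \<mu>1))"
      using ne by (simp add: field_simps)
    with False have p1: "p1_const \<mu>1 L1 L2 =
        inverse L2 * ((L2 - \<mu>1) / (L1 - \<mu>1)) + inverse L2 * (1 + \<mu>1 * (L1 - L2) / (L2 * (L1 - \<mu>1)))"
      by (simp add: p1_const_def)
    show ?thesis
      unfolding p1 using ne by (simp add: divide_simps power2_eq_square)
  qed
  also have "\<dots> = L2 + \<mu>1 + (L2 - \<mu>1)\<^sup>2 / (L1 - \<mu>1)"
    using ne by (simp add: divide_simps power2_eq_square) (simp add: algebra_simps)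
  finally show ?thesis .
qed

lemma p1_const_pos:
  assumes "0 \<le> \<mu>1" "\<mu>1 < L2" "L2 \<le> L1"
  shows "0 < p1_const \<mu>1 L1 L2"
proof -
  have "0 < L2 + \<mu>1 + (L2 - \<mu>1)\<^sup>2 / (L1 - \<mu>1)"
    using assms by (simp add: add_pos_nonneg)
  then have "0 < p1_const \<mu>1 L1 L2 * L2\<^sup>2"
    using p1_const_closed_form[OF assms] by simp
  then show ?thesis
    by (simp add: zero_less_mult_iff)
qed

(* The statement's data with grid step h = -U/L2 and d = Delta/N; d is the amount by which
   f1 - f2 drops from one node to the next. *)
locale dca_worst_case =
  fixes \<mu>1 L1 L2 h d x0 g20 f20 :: real and N :: nat
    and x g1 f1k xbar :: "nat \<Rightarrow> real" and f1 f2 :: "real \<Rightarrow> real"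
  assumes curvatures: "0 \<le> \<mu>1" "\<mu>1 < L2" "L2 \<le> L1"
    and h_pos: "0 < h"
    and d_eq: "2 * d = (L2 * h)\<^sup>2 * p1_const \<mu>1 L1 L2"
    and x_eq: "\<And>k. x k = x0 + real k * h"
    and g1_eq: "\<And>k. g1 k = g20 + (real k - 1) * L2 * h"
    and f2_eq: "f2 = (\<lambda>y. 1/2 * L2 * (y - x0)\<^sup>2 + g20 * (y - x0) + f20)"
    and f1k_eq: "\<And>k. f1k k = f2 (x k) + (real N - real k) * d"
    and xbar_eq: "\<And>k. xbar k = x k + (L2 - \<mu>1) / (L1 - \<mu>1) * h"
    and f1_eq: "f1 = (\<lambda>y.
           if y \<le> x0 then 1/2 * L1 * (y - x0)\<^sup>2 + g1 0 * (y - x0) + f1k 0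
           else if x N \<le> y then 1/2 * L1 * (y - x N)\<^sup>2 + g1 N * (y - x N) + f1k N
           else (let k = nat \<lfloor>(y - x0) / h\<rfloor> in
                 if y \<le> xbar k then 1/2 * L1 * (y - x k)\<^sup>2 + g1 k * (y - x k) + f1k k
                 else 1/2 * \<mu>1 * (y - x (Suc k))\<^sup>2 + g1 (Suc k) * (y - x (Suc k))
                      + f1k (Suc k)))"
begin

definition r :: real where
  "r = (L2 - \<mu>1) / (L1 - \<mu>1)"

lemma r_bounds: "0 < r" "r \<le> 1"
  using curvatures unfolding r_def by simp_all

lemma r_mult: "r * (L1 - \<mu>1) = L2 - \<mu>1"
  using curvatures unfolding r_def by simp

lemma d_eq_r: "2 * d = h\<^sup>2 * (L2 + \<mu>1 + r * (L2 - \<mu>1))"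
proof -
  have "2 * d = h\<^sup>2 * (p1_const \<mu>1 L1 L2 * L2\<^sup>2)"
    using d_eq by (simp add: power_mult_distrib)
  also have "\<dots> = h\<^sup>2 * (L2 + \<mu>1 + r * (L2 - \<mu>1))"
    using p1_const_closed_form[OF curvatures] by (simp add: r_def power2_eq_square)
  finally show ?thesis .
qed

definition steep :: "nat \<Rightarrow> real \<Rightarrow> real" where
  "steep k = parabola L1 (x k) (g1 k) (f1k k)"

definition flat :: "nat \<Rightarrow> real \<Rightarrow> real" where
  "flat k = parabola \<mu>1 (x k) (g1 k) (f1k k)"

definition steep' :: "nat \<Rightarrow> real \<Rightarrow> real" where
  "steep' k y = L1 * (y - x k) + g1 k"

definition flat' :: "nat \<Rightarrow> real \<Rightarrow> real" where
  "flat' k y = \<mu>1 * (y - x k) + g1 k"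

definition f1' :: "real \<Rightarrow> real" where
  "f1' = grid_glue x0 h r N steep' flat'"

lemma f1_eq_grid_glue: "f1 = grid_glue x0 h r N steep flat"
proof
  fix y
  show "f1 y = grid_glue x0 h r N steep flat y"
    by (simp add: f1_eq grid_glue_def steep_def flat_def parabola_def x_eq xbar_eq r_def Let_def)
qed

lemma steep_flat_at_xbar: "steep k (xbar k) = flat (Suc k) (xbar k)"
  using d_eq_r r_mult
  unfolding steep_def flat_def parabola_def xbar_eq x_eq g1_eq f1k_eq f2_eq r_def[symmetric]
  by simp algebra

lemma f1_piecewise:
  "piecewise (grid_point x0 h r) (2 * N) (steep 0)
     (\<lambda>j. if even j then steep (j div 2) else flat (Suc (j div 2))) (steep N) f1"
  unfolding f1_eq_grid_glue
proof (rule piecewise_grid_glue)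
  show "steep k (x0 + real k * h) = flat k (x0 + real k * h)" for k
    by (simp add: steep_def flat_def parabola_def x_eq)
  show "steep k (x0 + real k * h + r * h) = flat (Suc k) (x0 + real k * h + r * h)" for k
    using steep_flat_at_xbar[of k] by (simp add: xbar_eq x_eq r_def)
qed (use h_pos r_bounds in auto)

lemma f1'_piecewise:
  "piecewise (grid_point x0 h r) (2 * N) (steep' 0)
     (\<lambda>j. if even j then steep' (j div 2) else flat' (Suc (j div 2))) (steep' N) f1'"
  unfolding f1'_def
proof (rule piecewise_grid_glue)
  show "steep' k (x0 + real k * h) = flat' k (x0 + real k * h)" for k
    by (simp add: steep'_def flat'_def x_eq)
  show "steep' k (x0 + real k * h + r * h) = flat' (Suc k) (x0 + real k * h + r * h)" for k
  proof -
    have "r * (L1 - \<mu>1) * h = (L2 - \<mu>1) * h"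
      using r_mult by simp
    then show ?thesis
      by (simp add: steep'_def flat'_def x_eq g1_eq algebra_simps)
  qed
qed (use h_pos r_bounds in auto)


lemma f1_has_derivative: "(f1 has_real_derivative f1' y) (at y)"
proof (rule has_real_derivative_if_piecewise[OF f1_piecewise f1'_piecewise])
  have steep: "(steep k has_real_derivative steep' k y) (at y)"
    and flat: "(flat k has_real_derivative flat' k y) (at y)" for k y
    unfolding steep_def steep'_def flat_def flat'_def by (rule has_real_derivative_parabola)+
  show "(steep 0 has_real_derivative steep' 0 y) (at y)"
    and "(steep N has_real_derivative steep' N y) (at y)" for y
    by (rule steep)+
  show "((if even j then steep (j div 2) else flat (Suc (j div 2))) has_real_derivative
      (if even j then steep' (j div 2) else flat' (Suc (j div 2))) y) (at y)" for j y
    by (cases "even j") (simp_all add: steep flat)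
qed

lemma f1'_slope_bounds:
  "mono (\<lambda>y. f1' y - \<mu>1 * y)" "mono (\<lambda>y. L1 * y - f1' y)"
proof -
  have "(\<lambda>y. steep' k y - \<mu>1 * y) = (\<lambda>y. (L1 - \<mu>1) * y + (g1 k - L1 * x k))"
    and "(\<lambda>y. flat' k y - \<mu>1 * y) = (\<lambda>y. g1 k - \<mu>1 * x k)"
    and "(\<lambda>y. L1 * y - steep' k y) = (\<lambda>y. L1 * x k - g1 k)"
    and "(\<lambda>y. L1 * y - flat' k y) = (\<lambda>y. (L1 - \<mu>1) * y + (\<mu>1 * x k - g1 k))" for k
    by (auto simp: steep'_def flat'_def algebra_simps)
  then have lower: "mono (\<lambda>y. steep' k y - \<mu>1 * y)" "mono (\<lambda>y. flat' k y - \<mu>1 * y)"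
    and upper: "mono (\<lambda>y. L1 * y - steep' k y)" "mono (\<lambda>y. L1 * y - flat' k y)" for k
    using curvatures by (simp_all add: mono_affine monoI)
  have "piecewise (grid_point x0 h r) (2 * N) (\<lambda>y. steep' 0 y - \<mu>1 * y)
      (\<lambda>j y. (if even j then steep' (j div 2) else flat' (Suc (j div 2))) y - \<mu>1 * y)
      (\<lambda>y. steep' N y - \<mu>1 * y) (\<lambda>y. f1' y - \<mu>1 * y)"
    using piecewise_compose[OF f1'_piecewise, of "\<lambda>y v. v - \<mu>1 * y"] by simp
  then show "mono (\<lambda>y. f1' y - \<mu>1 * y)"
    by (rule mono_if_piecewise) (simp_all add: lower)
  have "piecewise (grid_point x0 h r) (2 * N) (\<lambda>y. L1 * y - steep' 0 y)
      (\<lambda>j y. L1 * y - (if even j then steep' (j div 2) else flat' (Suc (j div 2))) y)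
      (\<lambda>y. L1 * y - steep' N y) (\<lambda>y. L1 * y - f1' y)"
    using piecewise_compose[OF f1'_piecewise, of "\<lambda>y v. L1 * y - v"] by simp
  then show "mono (\<lambda>y. L1 * y - f1' y)"
    by (rule mono_if_piecewise) (simp_all add: upper)
qed

lemma f1_in_class: "FmuL \<mu>1 L1 f1"
  using f1_has_derivative f1'_slope_bounds by (rule FmuL_if_derivative_slopes)

lemma f1_convex: "convex_on UNIV f1"
proof (rule convex_on_realI[OF connected_UNIV f1_has_derivative])
  fix a b :: real assume "a \<le> b"
  then have "f1' a - \<mu>1 * a \<le> f1' b - \<mu>1 * b" "\<mu>1 * a \<le> \<mu>1 * b"
    using monoD[OF f1'_slope_bounds(1)] mult_left_mono curvatures(1) by simp_all
  then show "f1' a \<le> f1' b"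
    by linarith
qed

lemma f1'_at_node: "k \<le> N \<Longrightarrow> f1' (x k) = g1 k"
  using grid_glue_node[OF h_pos, of r k N x0 steep' flat'] r_bounds
  by (simp add: f1'_def steep'_def x_eq)

lemma f2_has_derivative_at_node: "(f2 has_real_derivative g1 (Suc k)) (at (x k))"
proof -
  have "(f2 has_real_derivative L2 * (x k - x0) + g20) (at (x k))"
    using has_real_derivative_parabola unfolding f2_eq parabola_def .
  moreover have "L2 * (x k - x0) + g20 = g1 (Suc k)"
    by (simp add: x_eq g1_eq algebra_simps)
  ultimately show ?thesis
    by simp
qed

lemma dca_step_along_grid: "k < N \<Longrightarrow> dca_step f1 f2 (x k) (x (Suc k))"
  using f1_has_derivative[of "x (Suc k)"] f1'_at_node[of "Suc k"]
  by (intro dca_step_if_convex[OF f1_convex _ f2_has_derivative_at_node]) simp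

lemma gradient_gap_at_node: "k \<le> N \<Longrightarrow> deriv f1 (x k) - deriv f2 (x k) = - L2 * h"
  using DERIV_imp_deriv[OF f1_has_derivative] DERIV_imp_deriv[OF f2_has_derivative_at_node]
    f1'_at_node by (simp add: g1_eq algebra_simps)

lemma half_min_squared_gap:
  "1/2 * Min ((\<lambda>k. (deriv f1 (x k) - deriv f2 (x k))\<^sup>2) ` {0..N}) = d / p1_const \<mu>1 L1 L2"
proof -
  have "(\<lambda>k. (deriv f1 (x k) - deriv f2 (x k))\<^sup>2) ` {0..N} = (\<lambda>k. (L2 * h)\<^sup>2) ` {0..N}"
    using gradient_gap_at_node by (intro image_cong) simp_all
  moreover have "0 < p1_const \<mu>1 L1 L2"
    using curvatures by (rule p1_const_pos)
  ultimately show ?thesis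
    using d_eq by (simp add: field_simps)
qed

lemma f2_in_class: "\<mu>2 \<le> L2 \<Longrightarrow> FmuL \<mu>2 L2 f2"
  using FmuL_parabola[of \<mu>2 L2 L2] by (simp add: f2_eq parabola_def)

end

theorem proposition5:
  fixes f10 f20 g20 x0 \<mu>1 L1 \<mu>2 L2 \<Delta> U :: real and N :: nat
    and x g1 f1k xbar :: "nat \<Rightarrow> real" and f1 f2 :: "real \<Rightarrow> real"
  assumes hDelta: "f10 - f20 > 0"
    and hN: "N \<ge> 1"
    and hmu1: "0 \<le> \<mu>1" and h12: "\<mu>1 < L2" and h21: "L2 \<le> L1"
    and hmu2a: "\<mu>2 < L2" and hmu2b: "\<mu>2 < L1"
    and hcase: "\<mu>2 \<ge> 0 \<or>
      (\<mu>1 > - \<mu>2 \<and> - \<mu>2 > 0 \<and>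
       (L2 + \<mu>2) / (L1 * L2) * ((L2 - L1) / (- \<mu>2)) + inverse \<mu>1 - inverse L1 \<le> 0)"
    and Delta_def: "\<Delta> = f10 - f20"
    and U_def: "U = - sqrt (2 * \<Delta> / (p1_const \<mu>1 L1 L2 * real N))"
    and x_def: "x = (\<lambda>k::nat. x0 - real k * U / L2)"
    and g1_def: "g1 = (\<lambda>k::nat. g20 - (real k - 1) * U)"
    and f2_def: "f2 = (\<lambda>y::real. 1/2 * L2 * (y - x0)\<^sup>2 + g20 * (y - x0) + f20)"
    and f1k_def: "f1k = (\<lambda>k::nat. f2 (x k) + (real N - real k) / real N * \<Delta>)"
    and xbar_def: "xbar = (\<lambda>k::nat. x k - (L2 - \<mu>1) / (L1 - \<mu>1) * U / L2)"
    and f1_def: "f1 = (\<lambda>y::real.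
           if y \<le> x0 then 1/2 * L1 * (y - x0)\<^sup>2 + g1 0 * (y - x0) + f1k 0
           else if x N \<le> y then 1/2 * L1 * (y - x N)\<^sup>2 + g1 N * (y - x N) + f1k N
           else (let k = nat \<lfloor>(y - x0) / (- U / L2)\<rfloor> in
                 if y \<le> xbar k then 1/2 * L1 * (y - x k)\<^sup>2 + g1 k * (y - x k) + f1k k
                 else 1/2 * \<mu>1 * (y - x (Suc k))\<^sup>2 + g1 (Suc k) * (y - x (Suc k))
                      + f1k (Suc k)))"
  shows "FmuL \<mu>1 L1 f1 \<and> FmuL \<mu>2 L2 f2
    \<and> (\<forall>k<N. dca_step f1 f2 (x k) (x (Suc k)))
    \<and> 1/2 * Min ((\<lambda>k. (deriv f1 (x k) - deriv f2 (x k))\<^sup>2) ` {0..N})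
        = \<Delta> / (p1_const \<mu>1 L1 L2 * real N)"
proof -
  have L2_pos: "0 < L2"
    using hmu1 h12 by linarith
  have p_pos: "0 < p1_const \<mu>1 L1 L2"
    using hmu1 h12 h21 by (rule p1_const_pos)
  then have "0 < 2 * \<Delta> / (p1_const \<mu>1 L1 L2 * real N)"
    using hDelta Delta_def hN by simp
  then have U_sq: "U\<^sup>2 = 2 * \<Delta> / (p1_const \<mu>1 L1 L2 * real N)" and "U < 0"
    unfolding U_def by simp_all
  interpret dca_worst_case \<mu>1 L1 L2 "- U / L2" "\<Delta> / real N" x0 g20 f20 N x g1 f1k xbar f1 f2
  proof
    show "0 < - U / L2"
      using \<open>U < 0\<close> L2_pos by (simp add: divide_neg_pos)
    show "2 * (\<Delta> / real N) = (L2 * (- U / L2))\<^sup>2 * p1_const \<mu>1 L1 L2"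
      using U_sq L2_pos p_pos hN by (simp add: field_simps)
    show "g1 k = g20 + (real k - 1) * L2 * (- U / L2)" for k
      using L2_pos by (simp add: g1_def)
  qed (use hmu1 h12 h21 f2_def f1_def in \<open>simp_all add: x_def f1k_def xbar_def\<close>)
  show ?thesis
    using f1_in_class f2_in_class hmu2a dca_step_along_grid half_min_squared_gap by simp
qed

end
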